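(* Let $\mathcal{S}$ be a finite set of states and, for each $s\in\mathcal{S}$, let $\mathcal{A}(s)$ be a finite nonempty set of actions. For logits $\theta=(\theta_{s,a})$ let $\pi_\theta(a\mid s)=\exp(\theta_{s,a})/\sum_{a'\in\mathcal{A}(s)}\exp(\theta_{s,a'})$. Fix old logits $\theta_{\mathrm{old}}$, current logits $\theta^k$, an advantage function $A:\{(s,a)\}\to\mathbb{R}$, weights $d(s)\ge 0$ (the state visitation distribution of $\pi_{\theta_{\mathrm{old}}}$), a learning rate $\eta>0$, $\epsilon\in(0,1)$ and $\delta>0$. Write $w_{s,a}(\theta)=\pi_\theta(a\mid s)/\pi_{\theta_{\mathrm{old}}}(a\mid s)$, and for $l<u$ let $$J^{l,u}(\theta)=\sum_{s\in\mathcal{S}} d(s)\sum_{a\in\mathcal{A}(s)}\pi_{\theta_{\mathrm{old}}}(a\mid s)\,\mathrm{clip}\big(w_{s,a}(\theta),l,u\big)\,A(s,a),$$ where $\mathrm{clip}(w,l,u)=\min(\max(w,l),u)$. Let $0<l_\delta<1<u_\delta$ be the two solutions of $w-1-\log w=\delta$. Define the one-step updates $$\theta^{\mathrm{ratio},k+1}=\theta^k+\eta\,\nabla_\theta J^{1-\epsilon,1+\epsilon}(\theta^k),\qquad \theta^{\mathrm{ATR},k+1}=\theta^k+\eta\,\nabla_\theta J^{l_\delta,u_\delta}(\theta^k),$$ and $\Delta\theta_{s,a}=\theta^{\mathrm{ATR},k+1}_{s,a}-\theta^{\mathrm{ratio},k+1}_{s,a}$. Assume that no ratio $w_{s,a}(\theta^k)$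 equals any of $1-\epsilon,\,1+\epsilon,\,l_\delta,\,u_\delta$. Fix $s\in\mathcal{S}$. (a) If $1+\epsilon=u_\delta$, let $X_-(s)=\{a\in\mathcal{A}(s): w_{s,a}(\theta^k)\in[1-\epsilon,\,l_\delta]\}$ with indicator $\mathbb{I}_{X_-(s)}$. Then for every $a\in\mathcal{A}(s)$, $$\Delta\theta_{s,a}=-\eta\, d(s)\,\pi_{\theta^k}(a\mid s)\Big[A(s,a)\mathbb{I}_{X_-(s)}(a)-\mathbb{E}_{a'\sim\pi_{\theta^k}(\cdot\mid s)}\big[A(s,a')\mathbb{I}_{X_-(s)}(a')\big]\Big].$$ (b) If $1-\epsilon=l_\delta$, let $X_+(s)=\{a\in\mathcal{A}(s): w_{s,a}(\theta^k)\in[1+\epsilon,\,u_\delta]\}$ with indicator $\mathbb{I}_{X_+(s)}$. Then for every $a\in\mathcal{A}(s)$, $$\Delta\theta_{s,a}=\eta\, d(s)\,\pi_{\theta^k}(a\mid s)\Big[A(s,a)\mathbb{I}_{X_+(s)}(a)-\mathbb{E}_{a'\sim\pi_{\theta^k}(\cdot\mid s)}\big[A(s,a')\mathbb{I}_{X_+(s)}(a')\big]\Big].$$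
   Context: This compares one full-batch policy-gradient step with a softmax (tabular) policy under symmetric ratio-based clipping of the likelihood ratio to $[1-\epsilon,1+\epsilon]$ ("ratio-based clipping") versus clipping to $[l_\delta,u_\delta]$, the interval on which the KL3 estimator $w-1-\log w$ is at most $\delta$ ("ATR-based clipping"). *)

theory Defs
  imports "HOL-Analysis.Analysis"
begin

definition softmax_pol :: "('s \<Rightarrow> 'a set) \<Rightarrow> ('s \<Rightarrow> 'a \<Rightarrow> real) \<Rightarrow> 's \<Rightarrow> 'a \<Rightarrow> real" where
  "softmax_pol Act \<theta> s a = exp (\<theta> s a) / (\<Sum>a'\<in>Act s. exp (\<theta> s a'))"

definition clip :: "real \<Rightarrow> real \<Rightarrow> real \<Rightarrow> real" where
  "clip w l u = min (max w l) u"

definition ratio :: "('s \<Rightarrow> 'a set) \<Rightarrow> ('s \<Rightarrow> 'a \<Rightarrow> real) \<Rightarrow> ('s \<Rightarrow> 'a \<Rightarrow> real) \<Rightarrow> 's \<Rightarrow> 'a \<Rightarrow> real" where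
  "ratio Act \<theta>old \<theta> s a = softmax_pol Act \<theta> s a / softmax_pol Act \<theta>old s a"

definition Jclip :: "'s set \<Rightarrow> ('s \<Rightarrow> 'a set) \<Rightarrow> ('s \<Rightarrow> real) \<Rightarrow> ('s \<Rightarrow> 'a \<Rightarrow> real)
    \<Rightarrow> ('s \<Rightarrow> 'a \<Rightarrow> real) \<Rightarrow> real \<Rightarrow> real \<Rightarrow> ('s \<Rightarrow> 'a \<Rightarrow> real) \<Rightarrow> real" where
  "Jclip S Act d Adv \<theta>old l u \<theta> =
     (\<Sum>s\<in>S. d s * (\<Sum>a\<in>Act s. softmax_pol Act \<theta>old s a * clip (ratio Act \<theta>old \<theta> s a) l u * Adv s a))"

definition grad_comp :: "(('s \<Rightarrow> 'a \<Rightarrow> real) \<Rightarrow> real) \<Rightarrow> ('s \<Rightarrow> 'a \<Rightarrow> real) \<Rightarrow> 's \<Rightarrow> 'a \<Rightarrow> real" where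
  "grad_comp F \<theta> s a = deriv (\<lambda>t. F (\<theta>(s := (\<theta> s)(a := t)))) (\<theta> s a)"

definition pg_step :: "real \<Rightarrow> (('s \<Rightarrow> 'a \<Rightarrow> real) \<Rightarrow> real) \<Rightarrow> ('s \<Rightarrow> 'a \<Rightarrow> real) \<Rightarrow> ('s \<Rightarrow> 'a \<Rightarrow> real)" where
  "pg_step \<eta> F \<theta> = (\<lambda>s a. \<theta> s a + \<eta> * grad_comp F \<theta> s a)"

end

theory Submission
  imports Defs
begin

text \<open>For 0 < l < 1 < u, the gradient of J^{l,u} at coordinate (s,a) is d(s) pi(a|s) times the
  advantage masked to the actions whose ratio lies in (l,u), centred under pi(.|s): the softmax
  Jacobian is pi(b|s)(1[b = a] - pi(a|s)) and clipping kills the actions outside (l,u). The two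
  updates therefore differ only through the actions whose ratio lies between the two clipping
  intervals. When 1 + eps = u, the KL3 estimator w - 1 - ln w being smaller at 1 + eps than at
  1 - eps forces 1 - eps < l, so that band is [1 - eps, l]; symmetrically, when 1 - eps = l the
  band is [1 + eps, u].\<close>

definition kl3 :: "real \<Rightarrow> real" where
  "kl3 w = w - 1 - ln w"

lemma kl3_strict_antimono:
  assumes "0 < a" "a < b" "b \<le> 1"
  shows "kl3 b < kl3 a"
proof (rule DERIV_neg_imp_decreasing_open[OF \<open>a < b\<close>])
  fix x assume x: "a < x" "x < b"
  then have "(kl3 has_real_derivative 1 - 1 / x) (at x)"
    using assms unfolding kl3_def by (auto intro!: derivative_eq_intros)
  moreover have "1 - 1 / x < 0"
    using x assms by (simp add: field_simps)
  ultimately show "\<exists>y. (kl3 has_real_derivative y) (at x) \<and> y < 0" by blast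
next
  show "continuous_on {a..b} kl3"
    using assms unfolding kl3_def by (auto intro!: continuous_intros)
qed

lemma kl3_strict_mono:
  assumes "1 \<le> a" "a < b"
  shows "kl3 a < kl3 b"
proof (rule DERIV_pos_imp_increasing_open[OF \<open>a < b\<close>])
  fix x assume x: "a < x" "x < b"
  then have "(kl3 has_real_derivative 1 - 1 / x) (at x)"
    using assms unfolding kl3_def by (auto intro!: derivative_eq_intros)
  moreover have "1 - 1 / x > 0"
    using x assms by (simp add: field_simps)
  ultimately show "\<exists>y. (kl3 has_real_derivative y) (at x) \<and> y > 0" by blast
next
  show "continuous_on {a..b} kl3"
    using assms unfolding kl3_def by (auto intro!: continuous_intros)
qed

text \<open>kl3 (1 - e) - kl3 (1 + e) = ln (1 + e) - ln (1 - e) - 2 e vanishes at e = 0 and has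
  derivative 2 e^2 / (1 - e^2) > 0.\<close>
lemma kl3_one_plus_less_one_minus:
  assumes "0 < e" "e < 1"
  shows "kl3 (1 + e) < kl3 (1 - e)"
proof -
  let ?g = "\<lambda>x::real. ln (1 + x) - ln (1 - x) - 2 * x"
  have "?g 0 < ?g e"
  proof (rule DERIV_pos_imp_increasing_open[OF \<open>0 < e\<close>])
    fix x :: real assume x: "0 < x" "x < e"
    then have "x * x < 1"
      using assms mult_strict_mono[of x 1 x 1] by simp
    then have "(?g has_real_derivative 2 * x\<^sup>2 / (1 - x\<^sup>2)) (at x)"
      using x assms
      by (auto intro!: derivative_eq_intros simp: field_simps power2_eq_square)
    moreover have "2 * x\<^sup>2 / (1 - x\<^sup>2) > 0"
      using \<open>x * x < 1\<close> x by (simp add: power2_eq_square)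
    ultimately show "\<exists>y. (?g has_real_derivative y) (at x) \<and> y > 0" by blast
  next
    show "continuous_on {0..e} ?g"
      using assms by (auto intro!: continuous_intros)
  qed
  then show ?thesis
    unfolding kl3_def by simp
qed

lemma kl3_eq_at_one_plus_imp_gt_one_minus:
  assumes "0 < e" "e < 1" "0 < l" "kl3 l = kl3 (1 + e)"
  shows "1 - e < l"
proof (rule ccontr)
  assume "\<not> 1 - e < l"
  then have "kl3 (1 - e) \<le> kl3 l"
    using kl3_strict_antimono[of l "1 - e"] assms by (cases "l = 1 - e") auto
  then show False
    using kl3_one_plus_less_one_minus assms by fastforce
qed

lemma kl3_eq_at_one_minus_imp_gt_one_plus:
  assumes "0 < e" "e < 1" "1 \<le> u" "kl3 u = kl3 (1 - e)"
  shows "1 + e < u"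
proof (rule ccontr)
  assume "\<not> 1 + e < u"
  then have "kl3 u \<le> kl3 (1 + e)"
    using kl3_strict_mono[of u "1 + e"] assms by (cases "u = 1 + e") auto
  then show False
    using kl3_one_plus_less_one_minus assms by fastforce
qed

lemma clip_has_real_derivative:
  assumes "l < u" "y \<noteq> l" "y \<noteq> u"
  shows "((\<lambda>w. clip w l u) has_real_derivative indicator {l<..<u} y) (at y)"
proof -
  consider "y < l" | "y \<in> {l<..<u}" | "u < y"
    using assms by force
  then show ?thesis
  proof cases
    case 1
    then have ev: "\<forall>\<^sub>F w in nhds y. clip w l u = l"
      using eventually_nhds_in_open[of "{..<l}" y] \<open>l < u\<close>
      by (auto elim!: eventually_mono simp: clip_def)
    then show ?thesis
      using 1 by (simp add: DERIV_cong_ev[OF refl ev refl])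
  next
    case 2
    then have ev: "\<forall>\<^sub>F w in nhds y. clip w l u = w"
      using eventually_nhds_in_open[of "{l<..<u}" y]
      by (auto elim!: eventually_mono simp: clip_def)
    then show ?thesis
      using 2 by (simp add: DERIV_cong_ev[OF refl ev refl])
  next
    case 3
    then have ev: "\<forall>\<^sub>F w in nhds y. clip w l u = u"
      using eventually_nhds_in_open[of "{u<..}" y] \<open>l < u\<close>
      by (auto elim!: eventually_mono simp: clip_def)
    then show ?thesis
      using 3 by (simp add: DERIV_cong_ev[OF refl ev refl])
  qed
qed

lemma softmax_pol_pos:
  assumes "finite (Act s)" "b \<in> Act s"
  shows "softmax_pol Act \<theta> s b > 0"
  unfolding softmax_pol_def using assms by (intro divide_pos_pos sum_pos) auto

lemma softmax_pol_has_derivative: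
  assumes fin: "finite (Act s)" and a: "a \<in> Act s"
  shows "((\<lambda>t. softmax_pol Act (\<theta>(s := (\<theta> s)(a := t))) s b) has_real_derivative
           softmax_pol Act \<theta> s b * ((if b = a then 1 else 0) - softmax_pol Act \<theta> s a)) (at (\<theta> s a))"
proof -
  define Z where "Z = (\<Sum>c\<in>Act s. exp (\<theta> s c))"
  have "Z > 0"
    unfolding Z_def using fin a by (intro sum_pos) auto
  have exp_coord: "((\<lambda>t. exp ((\<theta>(s := (\<theta> s)(a := t))) s c)) has_real_derivative
             (if c = a then exp (\<theta> s a) else 0)) (at (\<theta> s a))" for c
    by (cases "c = a") (auto intro!: derivative_eq_intros)
  have "((\<lambda>t. \<Sum>c\<in>Act s. exp ((\<theta>(s := (\<theta> s)(a := t))) s c)) has_real_derivative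
             (\<Sum>c\<in>Act s. if c = a then exp (\<theta> s a) else 0)) (at (\<theta> s a))"
    by (rule DERIV_sum) (rule exp_coord)
  then have "((\<lambda>t. \<Sum>c\<in>Act s. exp ((\<theta>(s := (\<theta> s)(a := t))) s c)) has_real_derivative
             exp (\<theta> s a)) (at (\<theta> s a))"
    using fin a by simp
  from DERIV_divide[OF exp_coord[of b] this] \<open>Z > 0\<close>
  have "((\<lambda>t. softmax_pol Act (\<theta>(s := (\<theta> s)(a := t))) s b) has_real_derivative
      ((if b = a then exp (\<theta> s a) else 0) * Z - exp (\<theta> s b) * exp (\<theta> s a)) / (Z * Z)) (at (\<theta> s a))"
    unfolding softmax_pol_def by (simp add: Z_def)
  moreover have "((if b = a then exp (\<theta> s a) else 0) * Z - exp (\<theta> s b) * exp (\<theta> s a)) / (Z * Z)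
        = softmax_pol Act \<theta> s b * ((if b = a then 1 else 0) - softmax_pol Act \<theta> s a)"
    using \<open>Z > 0\<close> unfolding softmax_pol_def Z_def[symmetric] by (auto simp: field_simps)
  ultimately show ?thesis
    by simp
qed

definition unclipped :: "('s \<Rightarrow> 'a set) \<Rightarrow> ('s \<Rightarrow> 'a \<Rightarrow> real) \<Rightarrow> ('s \<Rightarrow> 'a \<Rightarrow> real)
    \<Rightarrow> real \<Rightarrow> real \<Rightarrow> 's \<Rightarrow> 'a set" where
  "unclipped Act \<theta>old \<theta> l u s = {b \<in> Act s. ratio Act \<theta>old \<theta> s b \<in> {l<..<u}}"

lemma clipped_ratio_has_derivative:
  assumes fin: "finite (Act s)" and a: "a \<in> Act s" and b: "b \<in> Act s" and "l < u"
    and no_kink: "ratio Act \<theta>old \<theta> s b \<noteq> l" "ratio Act \<theta>old \<theta> s b \<noteq> u"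
  shows "((\<lambda>t. softmax_pol Act \<theta>old s b * clip (ratio Act \<theta>old (\<theta>(s := (\<theta> s)(a := t))) s b) l u)
           has_real_derivative indicator (unclipped Act \<theta>old \<theta> l u s) b *
             softmax_pol Act \<theta> s b * ((if b = a then 1 else 0) - softmax_pol Act \<theta> s a)) (at (\<theta> s a))"
proof -
  let ?\<theta>t = "\<lambda>t. \<theta>(s := (\<theta> s)(a := t))"
  let ?Po = "softmax_pol Act \<theta>old s b"
  let ?dP = "softmax_pol Act \<theta> s b * ((if b = a then 1 else 0) - softmax_pol Act \<theta> s a)"
  let ?ind = "indicator (unclipped Act \<theta>old \<theta> l u s) b :: real"
  have "?Po \<noteq> 0"
    using softmax_pol_pos[where Act=Act and s=s and \<theta>=\<theta>old, OF fin b] by simp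
  have "((\<lambda>t. ratio Act \<theta>old (?\<theta>t t) s b) has_real_derivative ?dP / ?Po) (at (\<theta> s a))"
    unfolding ratio_def
    by (rule DERIV_cdivide[OF softmax_pol_has_derivative[where Act=Act and s=s, OF fin a]])
  moreover have "((\<lambda>w. clip w l u) has_real_derivative ?ind) (at (ratio Act \<theta>old (?\<theta>t (\<theta> s a)) s b))"
  proof -
    have "?ind = indicator {l<..<u} (ratio Act \<theta>old \<theta> s b)"
      using b by (simp add: unclipped_def indicator_def)
    then show ?thesis
      using clip_has_real_derivative[OF \<open>l < u\<close> no_kink] by simp
  qed
  ultimately have "((\<lambda>t. clip (ratio Act \<theta>old (?\<theta>t t) s b) l u) has_real_derivative ?ind * (?dP / ?Po))
      (at (\<theta> s a))"
    by (rule DERIV_chain2[rotated])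
  then have "((\<lambda>t. ?Po * clip (ratio Act \<theta>old (?\<theta>t t) s b) l u) has_real_derivative
      ?Po * (?ind * (?dP / ?Po))) (at (\<theta> s a))"
    by (rule DERIV_cmult)
  moreover have "?Po * (?ind * (?dP / ?Po)) = ?ind * ?dP"
    using \<open>?Po \<noteq> 0\<close> by simp
  ultimately show ?thesis
    by (simp only: mult.assoc)
qed

definition centered_adv :: "('s \<Rightarrow> 'a set) \<Rightarrow> ('s \<Rightarrow> 'a \<Rightarrow> real) \<Rightarrow> ('s \<Rightarrow> 'a \<Rightarrow> real)
    \<Rightarrow> 's \<Rightarrow> 'a set \<Rightarrow> 'a \<Rightarrow> real" where
  "centered_adv Act \<theta> Adv s X a =
     Adv s a * indicator X a - (\<Sum>a'\<in>Act s. softmax_pol Act \<theta> s a' * (Adv s a' * indicator X a'))"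

lemma softmax_jacobian_sum:
  assumes "finite (Act s)" "a \<in> Act s"
  shows "(\<Sum>b\<in>Act s. indicator X b * softmax_pol Act \<theta> s b *
            ((if b = a then 1 else 0) - softmax_pol Act \<theta> s a) * Adv s b)
         = softmax_pol Act \<theta> s a * centered_adv Act \<theta> Adv s X a"
proof -
  let ?P = "softmax_pol Act \<theta> s"
  have "(\<Sum>b\<in>Act s. indicator X b * ?P b * ((if b = a then 1 else 0) - ?P a) * Adv s b)
      = (\<Sum>b\<in>Act s. if b = a then ?P a * (Adv s a * indicator X a) else 0)
        - ?P a * (\<Sum>b\<in>Act s. ?P b * (Adv s b * indicator X b))"
    unfolding sum_distrib_left sum_subtractf[symmetric] by (rule sum.cong) (auto simp: algebra_simps)
  then show ?thesis
    using assms by (simp add: centered_adv_def algebra_simps)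
qed

lemma grad_comp_Jclip:
  assumes "finite S" "s \<in> S" and fin: "finite (Act s)" and a: "a \<in> Act s" and "l < u"
    and no_kink: "\<And>b. b \<in> Act s \<Longrightarrow> ratio Act \<theta>old \<theta> s b \<notin> {l, u}"
  shows "grad_comp (Jclip S Act d Adv \<theta>old l u) \<theta> s a =
           d s * softmax_pol Act \<theta> s a * centered_adv Act \<theta> Adv s (unclipped Act \<theta>old \<theta> l u s) a"
proof -
  let ?I = "unclipped Act \<theta>old \<theta> l u s"
  let ?P = "softmax_pol Act \<theta> s"
  let ?\<theta>t = "\<lambda>t. \<theta>(s := (\<theta> s)(a := t))"
  have state_term: "((\<lambda>t. d s' * (\<Sum>b\<in>Act s'. softmax_pol Act \<theta>old s' b *
        clip (ratio Act \<theta>old (?\<theta>t t) s' b) l u * Adv s' b)) has_real_derivative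
      (if s' = s then d s * (\<Sum>b\<in>Act s. indicator ?I b * ?P b * ((if b = a then 1 else 0) - ?P a) * Adv s b)
       else 0)) (at (\<theta> s a))" for s'
  proof (cases "s' = s")
    case True
    have "((\<lambda>t. softmax_pol Act \<theta>old s b * clip (ratio Act \<theta>old (?\<theta>t t) s b) l u * Adv s b)
        has_real_derivative indicator ?I b * ?P b * ((if b = a then 1 else 0) - ?P a) * Adv s b) (at (\<theta> s a))"
      if b: "b \<in> Act s" for b
    proof -
      have "ratio Act \<theta>old \<theta> s b \<noteq> l" "ratio Act \<theta>old \<theta> s b \<noteq> u"
        using no_kink[OF b] by auto
      from clipped_ratio_has_derivative[where Act=Act and s=s and \<theta>old=\<theta>old, OF fin a b \<open>l < u\<close> this]
      show ?thesis
        by (rule DERIV_cmult_right)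
    qed
    then show ?thesis
      using True by (auto intro!: DERIV_cmult DERIV_sum)
  next
    case False
    then show ?thesis
      by (simp add: ratio_def softmax_pol_def)
  qed
  let ?D = "\<lambda>s'. if s' = s then d s * (\<Sum>b\<in>Act s. indicator ?I b * ?P b *
              ((if b = a then 1 else 0) - ?P a) * Adv s b) else 0"
  have "((\<lambda>t. Jclip S Act d Adv \<theta>old l u (?\<theta>t t)) has_real_derivative sum ?D S) (at (\<theta> s a))"
    unfolding Jclip_def by (rule DERIV_sum) (rule state_term)
  moreover have "sum ?D S = d s * ?P a * centered_adv Act \<theta> Adv s ?I a"
    using \<open>finite S\<close> \<open>s \<in> S\<close> softmax_jacobian_sum[where Act=Act and s=s, OF fin a] by simp
  ultimately show ?thesis
    unfolding grad_comp_def by (metis DERIV_imp_deriv)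
qed

lemma centered_adv_Un:
  assumes "X \<inter> Y = {}"
  shows "centered_adv Act \<theta> Adv s (X \<union> Y) a = centered_adv Act \<theta> Adv s X a + centered_adv Act \<theta> Adv s Y a"
  using assms by (simp add: centered_adv_def indicator_disj_union sum.distrib algebra_simps)

lemma centered_adv_unclipped_split_below:
  assumes "lo < m" "m \<le> hi"
    and "\<And>b. b \<in> Act s \<Longrightarrow> ratio Act \<theta>old \<theta> s b \<notin> {lo, m}"
  shows "centered_adv Act \<theta> Adv s (unclipped Act \<theta>old \<theta> lo hi s) a =
           centered_adv Act \<theta> Adv s (unclipped Act \<theta>old \<theta> m hi s) a
         + centered_adv Act \<theta> Adv s {b \<in> Act s. ratio Act \<theta>old \<theta> s b \<in> {lo..m}} a"
proof -
  have "unclipped Act \<theta>old \<theta> lo hi s =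
      unclipped Act \<theta>old \<theta> m hi s \<union> {b \<in> Act s. ratio Act \<theta>old \<theta> s b \<in> {lo..m}}"
    using assms by (fastforce simp: unclipped_def)
  moreover have "unclipped Act \<theta>old \<theta> m hi s \<inter> {b \<in> Act s. ratio Act \<theta>old \<theta> s b \<in> {lo..m}} = {}"
    by (auto simp: unclipped_def)
  ultimately show ?thesis
    by (simp add: centered_adv_Un)
qed

lemma centered_adv_unclipped_split_above:
  assumes "m < hi" "lo \<le> m"
    and "\<And>b. b \<in> Act s \<Longrightarrow> ratio Act \<theta>old \<theta> s b \<notin> {m, hi}"
  shows "centered_adv Act \<theta> Adv s (unclipped Act \<theta>old \<theta> lo hi s) a =
           centered_adv Act \<theta> Adv s (unclipped Act \<theta>old \<theta> lo m s) a
         + centered_adv Act \<theta> Adv s {b \<in> Act s. ratio Act \<theta>old \<theta> s b \<in> {m..hi}} a"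
proof -
  have "unclipped Act \<theta>old \<theta> lo hi s =
      unclipped Act \<theta>old \<theta> lo m s \<union> {b \<in> Act s. ratio Act \<theta>old \<theta> s b \<in> {m..hi}}"
    using assms by (fastforce simp: unclipped_def)
  moreover have "unclipped Act \<theta>old \<theta> lo m s \<inter> {b \<in> Act s. ratio Act \<theta>old \<theta> s b \<in> {m..hi}} = {}"
    by (auto simp: unclipped_def)
  ultimately show ?thesis
    by (simp add: centered_adv_Un)
qed

lemma pg_step_Jclip_diff:
  assumes "finite S" "s \<in> S" "finite (Act s)" "a \<in> Act s" "l < u" "l' < u'"
    and "\<And>b. b \<in> Act s \<Longrightarrow> ratio Act \<theta>old \<theta> s b \<notin> {l, u, l', u'}"
  shows "pg_step \<eta> (Jclip S Act d Adv \<theta>old l u) \<theta> s a - pg_step \<eta> (Jclip S Act d Adv \<theta>old l' u') \<theta> s a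
      = \<eta> * d s * softmax_pol Act \<theta> s a *
          (centered_adv Act \<theta> Adv s (unclipped Act \<theta>old \<theta> l u s) a
           - centered_adv Act \<theta> Adv s (unclipped Act \<theta>old \<theta> l' u' s) a)"
proof -
  have "grad_comp (Jclip S Act d Adv \<theta>old l u) \<theta> s a =
      d s * softmax_pol Act \<theta> s a * centered_adv Act \<theta> Adv s (unclipped Act \<theta>old \<theta> l u s) a"
    by (rule grad_comp_Jclip) (use assms in auto)
  moreover have "grad_comp (Jclip S Act d Adv \<theta>old l' u') \<theta> s a =
      d s * softmax_pol Act \<theta> s a * centered_adv Act \<theta> Adv s (unclipped Act \<theta>old \<theta> l' u' s) a"
    by (rule grad_comp_Jclip) (use assms in auto)
  ultimately show ?thesis
    unfolding pg_step_def by (simp add: algebra_simps)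
qed

theorem theorem3:
  fixes S :: "'s set" and Act :: "'s \<Rightarrow> 'a set"
    and \<theta>old \<theta>k :: "'s \<Rightarrow> 'a \<Rightarrow> real" and Adv :: "'s \<Rightarrow> 'a \<Rightarrow> real"
    and d :: "'s \<Rightarrow> real" and \<eta> \<epsilon> \<delta> l\<^sub>\<delta> u\<^sub>\<delta> :: real and s :: 's
  assumes finS: "finite S"
    and finA: "\<And>s. s \<in> S \<Longrightarrow> finite (Act s)"
    and neA: "\<And>s. s \<in> S \<Longrightarrow> Act s \<noteq> {}"
    and d_nonneg: "\<And>s. s \<in> S \<Longrightarrow> d s \<ge> 0"
    and eta_pos: "\<eta> > 0"
    and eps: "0 < \<epsilon>" "\<epsilon> < 1"
    and delta_pos: "\<delta> > 0"
    and l_bounds: "0 < l\<^sub>\<delta>" "l\<^sub>\<delta> < 1"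
    and u_bounds: "1 < u\<^sub>\<delta>"
    and l_sol: "l\<^sub>\<delta> - 1 - ln l\<^sub>\<delta> = \<delta>"
    and u_sol: "u\<^sub>\<delta> - 1 - ln u\<^sub>\<delta> = \<delta>"
    and no_kink: "\<And>s' a'. s' \<in> S \<Longrightarrow> a' \<in> Act s' \<Longrightarrow>
        ratio Act \<theta>old \<theta>k s' a' \<notin> {1 - \<epsilon>, 1 + \<epsilon>, l\<^sub>\<delta>, u\<^sub>\<delta>}"
    and s_in: "s \<in> S"
  defines "\<theta>ratio \<equiv> pg_step \<eta> (Jclip S Act d Adv \<theta>old (1 - \<epsilon>) (1 + \<epsilon>)) \<theta>k"
    and "\<theta>ATR \<equiv> pg_step \<eta> (Jclip S Act d Adv \<theta>old l\<^sub>\<delta> u\<^sub>\<delta>) \<theta>k"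
    and "Xm \<equiv> {a \<in> Act s. ratio Act \<theta>old \<theta>k s a \<in> {1 - \<epsilon> .. l\<^sub>\<delta>}}"
    and "Xp \<equiv> {a \<in> Act s. ratio Act \<theta>old \<theta>k s a \<in> {1 + \<epsilon> .. u\<^sub>\<delta>}}"
  shows "(1 + \<epsilon> = u\<^sub>\<delta> \<longrightarrow> (\<forall>a \<in> Act s.
            \<theta>ATR s a - \<theta>ratio s a =
              - \<eta> * d s * softmax_pol Act \<theta>k s a *
                (Adv s a * indicator Xm a
                 - (\<Sum>a'\<in>Act s. softmax_pol Act \<theta>k s a' * (Adv s a' * indicator Xm a')))))
       \<and> (1 - \<epsilon> = l\<^sub>\<delta> \<longrightarrow> (\<forall>a \<in> Act s.
            \<theta>ATR s a - \<theta>ratio s a =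
              \<eta> * d s * softmax_pol Act \<theta>k s a *
                (Adv s a * indicator Xp a
                 - (\<Sum>a'\<in>Act s. softmax_pol Act \<theta>k s a' * (Adv s a' * indicator Xp a')))))"
proof -
  let ?P = "softmax_pol Act \<theta>k s"
  let ?c = "centered_adv Act \<theta>k Adv s"
  let ?R = "unclipped Act \<theta>old \<theta>k (1 - \<epsilon>) (1 + \<epsilon>) s"
  let ?T = "unclipped Act \<theta>old \<theta>k l\<^sub>\<delta> u\<^sub>\<delta> s"
  have kl3_l: "kl3 l\<^sub>\<delta> = \<delta>" and kl3_u: "kl3 u\<^sub>\<delta> = \<delta>"
    using l_sol u_sol by (simp_all add: kl3_def)
  have no_kink_s: "\<And>b. b \<in> Act s \<Longrightarrow> ratio Act \<theta>old \<theta>k s b \<notin> {l\<^sub>\<delta>, u\<^sub>\<delta>, 1 - \<epsilon>, 1 + \<epsilon>}"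
    using no_kink[OF s_in] by auto
  have step_diff: "\<theta>ATR s a - \<theta>ratio s a = \<eta> * d s * ?P a * (?c ?T a - ?c ?R a)" if "a \<in> Act s" for a
    unfolding \<theta>ATR_def \<theta>ratio_def
    by (rule pg_step_Jclip_diff) (use finS s_in finA that l_bounds u_bounds eps no_kink_s in auto)
  show ?thesis
  proof (intro conjI impI ballI)
    fix a assume u_eq: "1 + \<epsilon> = u\<^sub>\<delta>" and a: "a \<in> Act s"
    have "1 - \<epsilon> < l\<^sub>\<delta>"
      using kl3_eq_at_one_plus_imp_gt_one_minus[of \<epsilon> l\<^sub>\<delta>] eps l_bounds kl3_l kl3_u u_eq by simp
    then have "?c ?R a = ?c ?T a + ?c Xm a"
      unfolding Xm_def u_eq
      by (rule centered_adv_unclipped_split_below) (use l_bounds u_bounds no_kink_s in auto)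
    then show "\<theta>ATR s a - \<theta>ratio s a = - \<eta> * d s * ?P a * (Adv s a * indicator Xm a
        - (\<Sum>a'\<in>Act s. ?P a' * (Adv s a' * indicator Xm a')))"
      using step_diff[OF a] by (simp add: centered_adv_def[symmetric])
  next
    fix a assume l_eq: "1 - \<epsilon> = l\<^sub>\<delta>" and a: "a \<in> Act s"
    have "1 + \<epsilon> < u\<^sub>\<delta>"
      using kl3_eq_at_one_minus_imp_gt_one_plus[of \<epsilon> u\<^sub>\<delta>] eps u_bounds kl3_l kl3_u l_eq by simp
    then have "?c ?T a = ?c ?R a + ?c Xp a"
      unfolding Xp_def l_eq[symmetric]
      by (rule centered_adv_unclipped_split_above) (use eps no_kink_s l_eq in auto)
    then show "\<theta>ATR s a - \<theta>ratio s a = \<eta> * d s * ?P a * (Adv s a * indicator Xp a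
        - (\<Sum>a'\<in>Act s. ?P a' * (Adv s a' * indicator Xp a')))"
      using step_diff[OF a] by (simp add: centered_adv_def[symmetric])
  qed
qed

end
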